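(* Let $A \subset \mathbb{Z}^d$ be a finite set whose convex hull $\Delta_A$ is a $d$-dimensional simplex with vertices $v_1, \ldots, v_{d+1}$. Let $\widetilde{v} = (v,1) \in \mathbb{Z}^{d+1}$ denote the lift of $v \in \mathbb{Z}^d$, and let $\mathcal{C}_A = \{\sum_{a \in A} n_a \widetilde{a} : n_a \in \mathbb{N}\}$. Call $(g,H) \in \mathcal{C}_A$ (with $g \in \mathbb{Z}^d$, $H \in \mathbb{N}$) a minimal element of $\mathcal{C}_A$ if $(g,H) - \widetilde{v}_i \notin \mathcal{C}_A$ for every $i = 1, \ldots, d+1$, and enumerate the minimal elements of $\mathcal{C}_A$ as $(g_1,H_1), (g_2,H_2), \ldots$. Then for every $h \in \mathbb{N}$, \[ hA = \bigcup_j \Big\{ g_j + \sum_{i=1}^{d+1} k_i v_i : k_i \in \mathbb{N} \text{ for all } i, \ \sum_{i=1}^{d+1} k_i = h - H_j \Big\}. \]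
   Context: $\mathbb{N} = \{0,1,2,\ldots\}$. For $h \in \mathbb{N}$, $hA = \{a_1 + \cdots + a_h : a_i \in A\}$, with $0A = \{0\}$. *)

theory Defs
  imports "HOL-Analysis.Analysis"
begin

text \<open>Integer points of Z^d are modelled as int ^ 'n (d = CARD('n)).\<close>

definition to_real :: "int ^ 'n \<Rightarrow> real ^ 'n" where
  "to_real a = (\<chi> i. real_of_int (a $ i))"

definition sumset :: "nat \<Rightarrow> (int ^ 'n) set \<Rightarrow> (int ^ 'n) set" where
  "sumset h A = {\<Sum>i<h. f i | f. \<forall>i<h. f i \<in> A}"

definition lift :: "int ^ 'n \<Rightarrow> (int ^ 'n) \<times> int" where
  "lift v = (v, 1)"

definition coneA :: "(int ^ 'n) set \<Rightarrow> ((int ^ 'n) \<times> int) set" where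
  "coneA A = {\<Sum>a\<in>A. (int (n a) *s fst (lift a), int (n a) * snd (lift a)) | n. True}"

definition minimal_elts :: "(int ^ 'n) set \<Rightarrow> (int ^ 'n) set \<Rightarrow> ((int ^ 'n) \<times> int) set" where
  "minimal_elts A V = {p \<in> coneA A. \<forall>v\<in>V. p - lift v \<notin> coneA A}"

definition is_simplex_hull :: "(int ^ 'n) set \<Rightarrow> (int ^ 'n) set \<Rightarrow> bool" where
  "is_simplex_hull A V \<longleftrightarrow> card V = CARD('n) + 1 \<and>
     \<not> affine_dependent (to_real ` V) \<and> inj_on to_real V \<and>
     convex hull (to_real ` A) = convex hull (to_real ` V)"

end

theory Submission
  imports Defs
begin

text \<open>
  Both sides of the identity are read off the cone: \<open>x \<in> hA\<close> iff \<open>(x, h) \<in> C\<^sub>A\<close>.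
  Since the vertices lie in \<open>A\<close>, every \<open>(g, H) \<in> C\<^sub>A\<close> plus a combination \<open>\<Sum> k\<^sub>i v\<^sub>i\<close>
  with \<open>\<Sum> k\<^sub>i = h - H\<close> is again in \<open>C\<^sub>A\<close> at height \<open>h\<close>, which gives \<open>\<supseteq>\<close>.
  Conversely, writing \<open>(x, h) = (g, H) + \<Sum> k\<^sub>i (v\<^sub>i, 1)\<close> with \<open>(g, H) \<in> C\<^sub>A\<close> of least
  height \<open>H\<close>, the point \<open>(g, H)\<close> is minimal: subtracting a further lift of a vertex
  would give a decomposition of smaller height.  The simplex hypothesis enters only through
  the fact that vertices of \<open>conv A\<close> belong to \<open>A\<close>.
\<close>

lemma mem_coneA_iff:
  "p \<in> coneA A \<longleftrightarrow> (\<exists>n. p = ((\<Sum>a\<in>A. int (n a) *s a), (\<Sum>a\<in>A. int (n a))))"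
  unfolding coneA_def lift_def by (simp add: sum_prod)

lemma coneA_height_nonneg: "p \<in> coneA A \<Longrightarrow> snd p \<ge> 0"
  unfolding mem_coneA_iff by (auto intro!: sum_nonneg)

lemma sum_smult_add_of_bool:
  fixes A :: "(int ^ 'n) set" and n :: "int ^ 'n \<Rightarrow> nat"
  assumes "finite A" "a \<in> A"
  shows "(\<Sum>b\<in>A. int (n b + of_bool (b = a)) *s b) = (\<Sum>b\<in>A. int (n b) *s b) + a"
proof -
  have "int (n b + of_bool (b = a)) *s b = int (n b) *s b + (if b = a then b else 0)" for b
    by (simp add: vector_sadd_rdistrib)
  then show ?thesis
    using assms by (simp add: sum.distrib)
qed

lemma sum_add_of_bool:
  fixes n :: "'a \<Rightarrow> nat"
  assumes "finite A" "a \<in> A"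
  shows "(\<Sum>b\<in>A. n b + of_bool (b = a)) = Suc (sum n A)"
  using assms by (simp add: sum.distrib)

lemma sumset_0: "sumset 0 A = {0}"
  unfolding sumset_def by auto

lemma sumset_Suc: "sumset (Suc h) A = {x + a | x a. x \<in> sumset h A \<and> a \<in> A}"
proof (intro set_eqI iffI)
  fix y assume "y \<in> sumset (Suc h) A"
  then obtain f where "\<forall>i<Suc h. f i \<in> A" "y = (\<Sum>i<h. f i) + f h"
    unfolding sumset_def by auto
  then show "y \<in> {x + a | x a. x \<in> sumset h A \<and> a \<in> A}"
    unfolding sumset_def by fastforce
next
  fix y assume "y \<in> {x + a | x a. x \<in> sumset h A \<and> a \<in> A}"
  then obtain f a where f: "\<forall>i<h. f i \<in> A" "a \<in> A" "y = (\<Sum>i<h. f i) + a"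
    unfolding sumset_def by auto
  have "(\<Sum>i<h. (f(h := a)) i) = (\<Sum>i<h. f i)" by (intro sum.cong) auto
  with f have "\<forall>i<Suc h. (f(h := a)) i \<in> A" "y = (\<Sum>i<Suc h. (f(h := a)) i)"
    by (auto simp: less_Suc_eq)
  then show "y \<in> sumset (Suc h) A" unfolding sumset_def by blast
qed

lemma mem_sumset_iff_multiplicities:
  assumes "finite A"
  shows "x \<in> sumset h A \<longleftrightarrow> (\<exists>n. x = (\<Sum>a\<in>A. int (n a) *s a) \<and> sum n A = h)"
proof (induction h arbitrary: x)
  case 0
  have "sum n A = 0 \<Longrightarrow> (\<Sum>a\<in>A. int (n a) *s a) = 0" for n
    using assms by simp
  then show ?case by (auto simp: sumset_0 intro: exI[of _ "\<lambda>_. 0"])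
next
  case (Suc h)
  show ?case
  proof
    assume "x \<in> sumset (Suc h) A"
    then obtain y a n where "a \<in> A" "x = y + a" "y = (\<Sum>b\<in>A. int (n b) *s b)" "sum n A = h"
      using Suc.IH by (auto simp: sumset_Suc)
    then show "\<exists>n. x = (\<Sum>a\<in>A. int (n a) *s a) \<and> sum n A = Suc h"
      using assms sum_smult_add_of_bool[of A a n] sum_add_of_bool[of A a n]
      by (intro exI[of _ "\<lambda>b. n b + of_bool (b = a)"]) simp
  next
    assume "\<exists>n. x = (\<Sum>a\<in>A. int (n a) *s a) \<and> sum n A = Suc h"
    then obtain n where n: "x = (\<Sum>a\<in>A. int (n a) *s a)" "sum n A = Suc h" by blast
    then obtain a where a: "a \<in> A" "n a > 0"
      by (metis gr0I sum.neutral nat.distinct(1))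
    define n' where "n' b = n b - of_bool (b = a)" for b
    have n_eq: "n b = n' b + of_bool (b = a)" for b
      using a by (simp add: n'_def)
    have "sum n' A = h"
      using n(2) sum_add_of_bool[OF assms a(1), of n'] by (simp add: n_eq)
    then have "(\<Sum>b\<in>A. int (n' b) *s b) \<in> sumset h A"
      using Suc.IH by blast
    moreover have "x = (\<Sum>b\<in>A. int (n' b) *s b) + a"
      using sum_smult_add_of_bool[OF assms a(1), of n'] by (simp add: n(1) n_eq)
    ultimately show "x \<in> sumset (Suc h) A"
      using a(1) by (auto simp: sumset_Suc)
  qed
qed

lemma mem_sumset_iff_lift_mem_coneA:
  assumes "finite A"
  shows "x \<in> sumset h A \<longleftrightarrow> (x, int h) \<in> coneA A"
  unfolding mem_sumset_iff_multiplicities[OF assms] mem_coneA_iff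
  by (auto simp flip: of_nat_sum)

lemma coneA_add_vertex_combination:
  assumes "finite A" "V \<subseteq> A" "(g, H) \<in> coneA A"
  shows "(g + (\<Sum>v\<in>V. int (k v) *s v), H + int (sum k V)) \<in> coneA A"
proof -
  obtain n where n: "g = (\<Sum>a\<in>A. int (n a) *s a)" "H = (\<Sum>a\<in>A. int (n a))"
    using assms(3) unfolding mem_coneA_iff by blast
  have restrict: "sum f V = (\<Sum>a\<in>A. if a \<in> V then f a else 0)" for f :: "_ \<Rightarrow> 'b::comm_monoid_add"
    using assms(1,2) by (simp add: sum.inter_restrict[symmetric] Int_absorb1)
  let ?n' = "\<lambda>a. n a + (if a \<in> V then k a else 0)"
  have "int (?n' a) *s a = int (n a) *s a + (if a \<in> V then int (k a) *s a else 0)" for a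
    by (simp add: vector_sadd_rdistrib)
  then have vector_part: "g + (\<Sum>v\<in>V. int (k v) *s v) = (\<Sum>a\<in>A. int (?n' a) *s a)"
    by (simp add: n(1) restrict[of "\<lambda>v. int (k v) *s v"] sum.distrib)
  have "int (?n' a) = int (n a) + (if a \<in> V then int (k a) else 0)" for a
    by simp
  then have "H + int (sum k V) = (\<Sum>a\<in>A. int (?n' a))"
    by (simp add: n(2) of_nat_sum restrict[of "\<lambda>v. int (k v)"] sum.distrib)
  with vector_part show ?thesis
    unfolding mem_coneA_iff by (intro exI[of _ ?n']) simp
qed

lemma vertices_subset_if_simplex_hull:
  assumes "is_simplex_hull A V"
  shows "V \<subseteq> A"
proof
  fix v assume "v \<in> V"
  have "\<not> affine_dependent (to_real ` V)" "convex hull (to_real ` A) = convex hull (to_real ` V)"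
    using assms unfolding is_simplex_hull_def by auto
  with \<open>v \<in> V\<close> have "to_real v extreme_point_of (convex hull (to_real ` A))"
    using extreme_point_of_convex_hull_affine_independent by fastforce
  then have "to_real v \<in> to_real ` A"
    by (rule extreme_point_of_convex_hull)
  moreover have "inj to_real"
    by (rule injI) (simp add: to_real_def vec_eq_iff)
  ultimately show "v \<in> A"
    by (auto dest: injD)
qed

lemma finite_vertices_if_simplex_hull: "is_simplex_hull A V \<Longrightarrow> finite V"
  unfolding is_simplex_hull_def by (metis card.infinite add_is_0 one_neq_zero)

lemma sumset_subset_minimal_translates:
  assumes "finite A" "finite V"
  shows "sumset h A \<subseteq> (\<Union>(g, H)\<in>minimal_elts A V.
    {g + (\<Sum>v\<in>V. int (k v) *s v) | k :: int ^ 'n \<Rightarrow> nat. int (sum k V) = int h - H})"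
    (is "_ \<subseteq> (\<Union>(g, H)\<in>_. ?T g H)")
proof
  fix x assume "x \<in> sumset h A"
  define D where "D p \<longleftrightarrow> p \<in> coneA A \<and> x \<in> ?T (fst p) (snd p)" for p
  have "D (x, int h)"
    using \<open>x \<in> sumset h A\<close> mem_sumset_iff_lift_mem_coneA[OF assms(1)]
    by (auto simp: D_def intro: exI[of _ "\<lambda>_. 0"])
  then obtain g H where D: "D (g, H)" and least: "\<And>p. D p \<Longrightarrow> nat H \<le> nat (snd p)"
    using ex_has_least_nat[of D _ "\<lambda>p. nat (snd p)"] by force
  then obtain k where k: "x = g + (\<Sum>v\<in>V. int (k v) *s v)" "int (sum k V) = int h - H"
    unfolding D_def by auto
  have "(g, H) - lift v \<notin> coneA A" if "v \<in> V" for v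
  proof
    assume lower: "(g, H) - lift v \<in> coneA A"
    then have "H \<ge> 1"
      using coneA_height_nonneg by (fastforce simp: lift_def)
    have "x = (g - v) + (\<Sum>w\<in>V. int (k w + of_bool (w = v)) *s w)"
      using sum_smult_add_of_bool[OF assms(2) that, of k] by (simp add: k(1))
    moreover have "int (\<Sum>w\<in>V. k w + of_bool (w = v)) = int h - (H - 1)"
      using sum_add_of_bool[OF assms(2) that, of k] k(2) by simp
    ultimately have "x \<in> ?T (g - v) (H - 1)"
      by (intro CollectI exI[of _ "\<lambda>w. k w + of_bool (w = v)"] conjI)
    with lower have "D (g - v, H - 1)"
      unfolding D_def by (simp add: lift_def)
    with least[of "(g - v, H - 1)"] \<open>H \<ge> 1\<close> show False by simp
  qed
  with D show "x \<in> (\<Union>(g, H)\<in>minimal_elts A V. ?T g H)"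
    unfolding D_def minimal_elts_def by auto
qed

lemma minimal_translates_subset_sumset:
  assumes "finite A" "V \<subseteq> A"
  shows "(\<Union>(g, H)\<in>minimal_elts A V.
    {g + (\<Sum>v\<in>V. int (k v) *s v) | k :: int ^ 'n \<Rightarrow> nat. int (sum k V) = int h - H})
    \<subseteq> sumset h A"
proof clarify
  fix g H and k :: "int ^ 'n \<Rightarrow> nat"
  assume "(g, H) \<in> minimal_elts A V" "int (sum k V) = int h - H"
  then have "(g + (\<Sum>v\<in>V. int (k v) *s v), int h) \<in> coneA A"
    using coneA_add_vertex_combination[OF assms, of g H k] by (simp add: minimal_elts_def)
  then show "g + (\<Sum>v\<in>V. int (k v) *s v) \<in> sumset h A"
    using mem_sumset_iff_lift_mem_coneA[OF assms(1)] by blast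
qed

theorem proposition4p1:
  fixes A V :: "(int ^ 'n) set" and h :: nat
  assumes "finite A"
    and "is_simplex_hull A V"
  shows "sumset h A =
    (\<Union>(g, H)\<in>minimal_elts A V.
       {g + (\<Sum>v\<in>V. int (k v) *s v) | k :: int ^ 'n \<Rightarrow> nat.
          int (\<Sum>v\<in>V. k v) = int h - H})"
  using sumset_subset_minimal_translates[OF assms(1) finite_vertices_if_simplex_hull[OF assms(2)]]
    minimal_translates_subset_sumset[OF assms(1) vertices_subset_if_simplex_hull[OF assms(2)]]
  by (rule subset_antisym)

end
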